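(* Let $V$ be a finite ground set partitioned into groups $V_1,\dots,V_m$, $\alpha$ a nonnegative integer, $c$ a positive integer, $f:2^V\to\mathbb{R}_{\ge0}$ submodular, and let $OPT$ be an optimal solution of Problem P.2 (defined in the context). Let $z=\min_{i\in[m]}\lfloor|OPT\cap V_i|/2\rfloor$. Let $A^{P22}$ be any feasible solution of Problem P.2.2 and let $A^{\mathsf{final}}$ be obtained from it by the completion step described in the context. Then $A^{\mathsf{final}}$ is a feasible solution of Problem P.2.1, and hence of Problem P.2.
   Context: Problem P.2: maximize $f(S)$ over $S\subseteq V$ with $|S\cap V_i|-|S\cap V_j|\le\alpha$ for all $i,j\in[m]$ and $|S|\le c$. Problem P.2.1: maximize $f(S)$ subject to $z\le|S\cap V_i|\le z+\alpha$ for all $i\in[m]$ and $|S|\le c$. Problem P.2.2: maximize $f(S)$ subject to $|S\cap V_i|\le z+\alpha$ for all $i$ and $\sum_{i\in[m]}\max\{z,|S\cap V_i|\}\le c$. Completion step: let $L=\{i:|A^{P22}\cap V_i|<z\}$; for each $i\in L$ pick arbitrary disjoint $X_i,Y_i\subseteq V_i\setminus A^{P22}$ with $|X_i|=|Y_i|=z-|A^{P22}\cap V_i|$; let $A^1=A^{P22}\cup\bigcup_{i\in L}X_i$, $A^2=A^{P22}\cup\bigcup_{i\in L}Y_i$, and $A^{\mathsf{final}}$ is the one of $A^1,A^2$ with larger $f$-value. *)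

theory Defs
  imports Complex_Main
begin

text \<open>Groups are indexed by [m] = {1..m}; Vg i is the group V_i.\<close>

definition is_partition :: "'a set \<Rightarrow> nat \<Rightarrow> (nat \<Rightarrow> 'a set) \<Rightarrow> bool" where
  "is_partition V m Vg \<longleftrightarrow>
     (\<Union>i\<in>{1..m}. Vg i) = V \<and>
     (\<forall>i\<in>{1..m}. \<forall>j\<in>{1..m}. i \<noteq> j \<longrightarrow> Vg i \<inter> Vg j = {})"

definition submodular_on :: "'a set \<Rightarrow> ('a set \<Rightarrow> real) \<Rightarrow> bool" where
  "submodular_on V f \<longleftrightarrow>
     (\<forall>A B. A \<subseteq> V \<longrightarrow> B \<subseteq> V \<longrightarrow> f (A \<union> B) + f (A \<inter> B) \<le> f A + f B)"

definition feasible_P2 :: "'a set \<Rightarrow> nat \<Rightarrow> (nat \<Rightarrow> 'a set) \<Rightarrow> nat \<Rightarrow> nat \<Rightarrow> 'a set \<Rightarrow> bool" where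
  "feasible_P2 V m Vg \<alpha> c S \<longleftrightarrow>
     S \<subseteq> V \<and>
     (\<forall>i\<in>{1..m}. \<forall>j\<in>{1..m}. int (card (S \<inter> Vg i)) - int (card (S \<inter> Vg j)) \<le> int \<alpha>) \<and>
     card S \<le> c"

definition optimal_P2 :: "'a set \<Rightarrow> nat \<Rightarrow> (nat \<Rightarrow> 'a set) \<Rightarrow> nat \<Rightarrow> nat \<Rightarrow> ('a set \<Rightarrow> real) \<Rightarrow> 'a set \<Rightarrow> bool" where
  "optimal_P2 V m Vg \<alpha> c f OPT \<longleftrightarrow>
     feasible_P2 V m Vg \<alpha> c OPT \<and> (\<forall>S. feasible_P2 V m Vg \<alpha> c S \<longrightarrow> f S \<le> f OPT)"

definition feasible_P21 :: "'a set \<Rightarrow> nat \<Rightarrow> (nat \<Rightarrow> 'a set) \<Rightarrow> nat \<Rightarrow> nat \<Rightarrow> nat \<Rightarrow> 'a set \<Rightarrow> bool" where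
  "feasible_P21 V m Vg \<alpha> c z S \<longleftrightarrow>
     S \<subseteq> V \<and>
     (\<forall>i\<in>{1..m}. z \<le> card (S \<inter> Vg i) \<and> card (S \<inter> Vg i) \<le> z + \<alpha>) \<and>
     card S \<le> c"

definition feasible_P22 :: "'a set \<Rightarrow> nat \<Rightarrow> (nat \<Rightarrow> 'a set) \<Rightarrow> nat \<Rightarrow> nat \<Rightarrow> nat \<Rightarrow> 'a set \<Rightarrow> bool" where
  "feasible_P22 V m Vg \<alpha> c z S \<longleftrightarrow>
     S \<subseteq> V \<and>
     (\<forall>i\<in>{1..m}. card (S \<inter> Vg i) \<le> z + \<alpha>) \<and>
     (\<Sum>i\<in>{1..m}. max z (card (S \<inter> Vg i))) \<le> c"

definition deficient :: "nat \<Rightarrow> (nat \<Rightarrow> 'a set) \<Rightarrow> nat \<Rightarrow> 'a set \<Rightarrow> nat set" where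
  "deficient m Vg z A = {i\<in>{1..m}. card (A \<inter> Vg i) < z}"

definition completion :: "('a set \<Rightarrow> real) \<Rightarrow> nat \<Rightarrow> (nat \<Rightarrow> 'a set) \<Rightarrow> nat \<Rightarrow> 'a set
    \<Rightarrow> (nat \<Rightarrow> 'a set) \<Rightarrow> (nat \<Rightarrow> 'a set) \<Rightarrow> 'a set" where
  "completion f m Vg z A X Y =
     (let L = deficient m Vg z A;
          A1 = A \<union> (\<Union>i\<in>L. X i);
          A2 = A \<union> (\<Union>i\<in>L. Y i)
      in if f A2 \<le> f A1 then A1 else A2)"

end

theory Submission
  imports Defs
begin

text \<open>Each padding set lies in its own group, so every group of the padded set has exactly
  max z |A \<inter> V_i| elements: deficient groups are filled up to z, the others are untouched.
  Hence the group sizes lie in [z, z + \<alpha>], and the total size is the sum over i of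
  max z |A \<inter> V_i|, which P.2.2 bounds by c. Both candidates A^1 and A^2 are such paddings,
  and the P.2.1 group bounds imply the P.2 balance constraint. The argument works for any z.\<close>

definition padding :: "nat \<Rightarrow> (nat \<Rightarrow> 'a set) \<Rightarrow> nat \<Rightarrow> 'a set \<Rightarrow> (nat \<Rightarrow> 'a set) \<Rightarrow> 'a set" where
  "padding m Vg z A W = A \<union> (\<Union>i\<in>deficient m Vg z A. W i)"

lemma completion_eq_padding:
  "completion f m Vg z A X Y =
     (if f (padding m Vg z A Y) \<le> f (padding m Vg z A X)
      then padding m Vg z A X else padding m Vg z A Y)"
  by (simp add: completion_def padding_def Let_def)

lemma partition_group_subset:
  assumes "is_partition V m Vg" "i \<in> {1..m}"
  shows "Vg i \<subseteq> V"
  using assms unfolding is_partition_def by blast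

lemma card_eq_sum_card_Int_groups:
  assumes "finite V" "is_partition V m Vg" "B \<subseteq> V"
  shows "card B = (\<Sum>i\<in>{1..m}. card (B \<inter> Vg i))"
proof -
  have "B = (\<Union>i\<in>{1..m}. B \<inter> Vg i)"
    using assms(2,3) unfolding is_partition_def by blast
  also have "card \<dots> = (\<Sum>i\<in>{1..m}. card (B \<inter> Vg i))"
    using assms finite_subset unfolding is_partition_def
    by (intro card_UN_disjoint) blast+
  finally show ?thesis .
qed

lemma feasible_P21_imp_feasible_P2:
  assumes "feasible_P21 V m Vg \<alpha> c z S"
  shows "feasible_P2 V m Vg \<alpha> c S"
proof -
  have "int (card (S \<inter> Vg i)) - int (card (S \<inter> Vg j)) \<le> int \<alpha>"
    if "i \<in> {1..m}" "j \<in> {1..m}" for i j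
  proof -
    have "card (S \<inter> Vg i) \<le> z + \<alpha>" "z \<le> card (S \<inter> Vg j)"
      using assms that unfolding feasible_P21_def by auto
    then show ?thesis by linarith
  qed
  with assms show ?thesis
    unfolding feasible_P21_def feasible_P2_def by blast
qed

lemma card_padding_Int_group:
  assumes "finite V" "is_partition V m Vg" "i \<in> {1..m}"
    and W: "\<forall>j\<in>deficient m Vg z A. W j \<subseteq> Vg j - A \<and> card (W j) = z - card (A \<inter> Vg j)"
  shows "card (padding m Vg z A W \<inter> Vg i) = max z (card (A \<inter> Vg i))"
proof -
  have group_fin: "finite (Vg i)"
    using partition_group_subset[OF assms(2,3)] assms(1) by (rule finite_subset)
  have others: "W j \<inter> Vg i = {}" if "j \<in> deficient m Vg z A" "j \<noteq> i" for j
    using W that assms(2,3) unfolding is_partition_def deficient_def by blast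
  show ?thesis
  proof (cases "i \<in> deficient m Vg z A")
    case True
    have "padding m Vg z A W \<inter> Vg i = (A \<inter> Vg i) \<union> W i"
      using W True others unfolding padding_def by blast
    moreover have "card ((A \<inter> Vg i) \<union> W i) = card (A \<inter> Vg i) + card (W i)"
      using W True group_fin finite_subset by (intro card_Un_disjoint) blast+
    moreover have "card (A \<inter> Vg i) < z"
      using True unfolding deficient_def by simp
    ultimately show ?thesis
      using W True by simp
  next
    case False
    then have "padding m Vg z A W \<inter> Vg i = A \<inter> Vg i"
      using others unfolding padding_def by blast
    moreover have "z \<le> card (A \<inter> Vg i)"
      using False assms(3) unfolding deficient_def by simp
    ultimately show ?thesis by simp
  qed
qed

lemma feasible_P21_padding:
  assumes fin: "finite V" and part: "is_partition V m Vg"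
    and A: "feasible_P22 V m Vg \<alpha> c z A"
    and W: "\<forall>i\<in>deficient m Vg z A. W i \<subseteq> Vg i - A \<and> card (W i) = z - card (A \<inter> Vg i)"
  shows "feasible_P21 V m Vg \<alpha> c z (padding m Vg z A W)"
proof -
  let ?B = "padding m Vg z A W"
  have card_group: "card (?B \<inter> Vg i) = max z (card (A \<inter> Vg i))" if "i \<in> {1..m}" for i
    using card_padding_Int_group[OF fin part that W] .
  have B_sub: "?B \<subseteq> V"
    using A W partition_group_subset[OF part]
    unfolding padding_def feasible_P22_def deficient_def by auto
  have "card ?B = (\<Sum>i\<in>{1..m}. card (?B \<inter> Vg i))"
    using card_eq_sum_card_Int_groups[OF fin part B_sub] .
  also have "\<dots> = (\<Sum>i\<in>{1..m}. max z (card (A \<inter> Vg i)))"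
    using card_group by (rule sum.cong[OF refl])
  also have "\<dots> \<le> c"
    using A unfolding feasible_P22_def by simp
  finally have "card ?B \<le> c" .
  with B_sub card_group A show ?thesis
    unfolding feasible_P21_def feasible_P22_def by simp
qed

theorem lemma15:
  fixes V :: "'a set" and m :: nat and Vg :: "nat \<Rightarrow> 'a set"
    and \<alpha> c z :: nat and f :: "'a set \<Rightarrow> real"
    and OPT A :: "'a set" and X Y :: "nat \<Rightarrow> 'a set"
  assumes "finite V"
    and "m \<ge> 1"
    and "is_partition V m Vg"
    and "c > 0"
    and "\<forall>S. S \<subseteq> V \<longrightarrow> f S \<ge> 0"
    and "submodular_on V f"
    and "optimal_P2 V m Vg \<alpha> c f OPT"
    and "z = Min ((\<lambda>i. card (OPT \<inter> Vg i) div 2) ` {1..m})"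
    and "feasible_P22 V m Vg \<alpha> c z A"
    and "\<forall>i\<in>deficient m Vg z A.
           X i \<subseteq> Vg i - A \<and> Y i \<subseteq> Vg i - A \<and> X i \<inter> Y i = {} \<and>
           card (X i) = z - card (A \<inter> Vg i) \<and> card (Y i) = z - card (A \<inter> Vg i)"
  shows "feasible_P21 V m Vg \<alpha> c z (completion f m Vg z A X Y)
       \<and> feasible_P2 V m Vg \<alpha> c (completion f m Vg z A X Y)"
proof -
  have "feasible_P21 V m Vg \<alpha> c z (padding m Vg z A X)"
    using assms(10) by (intro feasible_P21_padding[OF assms(1,3,9)]) blast
  moreover have "feasible_P21 V m Vg \<alpha> c z (padding m Vg z A Y)"
    using assms(10) by (intro feasible_P21_padding[OF assms(1,3,9)]) blast
  ultimately have "feasible_P21 V m Vg \<alpha> c z (completion f m Vg z A X Y)"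
    unfolding completion_eq_padding by simp
  then show ?thesis
    using feasible_P21_imp_feasible_P2 by blast
qed

end
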